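(* The full subcategory $\overline{\mathcal{A}}_p(S)$ of $\mathcal{A}_p(S)$ is a semi-skeleton of $\mathcal{A}_p(S)$, and its number of objects is $\sum_{L\in\mathcal{L}}|H^1(L,T)|$.
   Context: Conventions: normalised cocycles $Z^n$, coboundaries $B^n$, cohomology $H^n$ for right modules written additively; $\mathrm{Ext}(\tau)$ is $G\times M$ with $(g,m)(h,n)=(gh,m^h+n+\tau(g,h))$. Setting: $S$ infinite pro-$p$-group of finite coclass; $T=\gamma_\ell(S)$ ($\ell$ large), $T\cong\mathbb{Z}_p^d$, $P=S/T$ finite, the series $T_0=T$, $T_{i+1}=[T_i,S]$ with all indices $p$; $T$ an additive $P$-module via conjugation; $S=\mathrm{Ext}(\rho)$, $\rho\in Z^2(P,T)$, $T=\{(1,t)\}$. For $L\leq P$, $\overline{L}$ is its full preimage in $S$. $\mathcal{L}$ = elementary abelian $L\leq P$ with $\rho_L\in B^2(L,T)$. For $L\in\mathcal{L}$ fix a complement $C_L=\{(l,t_L(l))\mid l\in L\}$ to $T$ in $\overline{L}$ and put $C_L(\delta)=\{(l,t_L(l)+\delta(l))\}$ for $\delta\in Z^1(L,T)$. Let $T^1(L,T)$ be a transversal of $B^1(L,T)$ in $Z^1(L,T)$. $\mathcal{A}_p(S)$ is the Quillen category (objects: elementary abelian subgroups of $S$; morphisms: injective homomorphisms induced by conjugation in $S$), and $\overline{\mathcal{A}}_p(S)$ is its full subcategory on the objects $C_L(\gamma)$ with $L\in\mathcal{L}$, $\gamma\in T^1(L,T)$. A semi-skeleton of a category is a full subcategory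 containing at least one object from each isomorphism class of objects. *)

theory Defs
  imports "HOL-Algebra.Algebra" "HOL-Library.Equipollence"
begin

text \<open>P is a group G (HOL-Algebra); T is the whole additive type 'm, a right
  P-module via act (m^g = act m g).\<close>

definition right_module :: "('g,'b) monoid_scheme \<Rightarrow> ('m::ab_group_add \<Rightarrow> 'g \<Rightarrow> 'm) \<Rightarrow> bool" where
  "right_module G act \<longleftrightarrow>
     (\<forall>m. act m \<one>\<^bsub>G\<^esub> = m) \<and>
     (\<forall>m. \<forall>g\<in>carrier G. \<forall>h\<in>carrier G. act m (g \<otimes>\<^bsub>G\<^esub> h) = act (act m g) h) \<and>
     (\<forall>m n. \<forall>g\<in>carrier G. act (m + n) g = act m g + act n g)"

text \<open>Normalised 2-cocycles (associativity condition for Ext(tau)).\<close>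
definition Z2 :: "('g,'b) monoid_scheme \<Rightarrow> ('m::ab_group_add \<Rightarrow> 'g \<Rightarrow> 'm) \<Rightarrow> ('g \<Rightarrow> 'g \<Rightarrow> 'm) set" where
  "Z2 G act = {\<tau>. (\<forall>g\<in>carrier G. \<tau> g \<one>\<^bsub>G\<^esub> = 0 \<and> \<tau> \<one>\<^bsub>G\<^esub> g = 0) \<and>
     (\<forall>g\<in>carrier G. \<forall>h\<in>carrier G. \<forall>k\<in>carrier G.
        act (\<tau> g h) k + \<tau> (g \<otimes>\<^bsub>G\<^esub> h) k = \<tau> h k + \<tau> g (h \<otimes>\<^bsub>G\<^esub> k))}"

definition in_B2 :: "'g set \<Rightarrow> ('g,'b) monoid_scheme \<Rightarrow> ('m::ab_group_add \<Rightarrow> 'g \<Rightarrow> 'm) \<Rightarrow> ('g \<Rightarrow> 'g \<Rightarrow> 'm) \<Rightarrow> bool" where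
  "in_B2 L G act \<tau> \<longleftrightarrow> (\<exists>f. f \<one>\<^bsub>G\<^esub> = 0 \<and>
     (\<forall>g\<in>L. \<forall>h\<in>L. \<tau> g h = f (g \<otimes>\<^bsub>G\<^esub> h) - act (f g) h - f h))"

text \<open>1-cocycles and 1-coboundaries of L with values in T (functions are taken
  to be 0 outside L, so that they are determined by their values on L).\<close>
definition Z1 :: "'g set \<Rightarrow> ('g,'b) monoid_scheme \<Rightarrow> ('m::ab_group_add \<Rightarrow> 'g \<Rightarrow> 'm) \<Rightarrow> ('g \<Rightarrow> 'm) set" where
  "Z1 L G act = {\<delta>. (\<forall>g. g \<notin> L \<longrightarrow> \<delta> g = 0) \<and>
     (\<forall>g\<in>L. \<forall>h\<in>L. \<delta> (g \<otimes>\<^bsub>G\<^esub> h) = act (\<delta> g) h + \<delta> h)}"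

definition B1 :: "'g set \<Rightarrow> ('g,'b) monoid_scheme \<Rightarrow> ('m::ab_group_add \<Rightarrow> 'g \<Rightarrow> 'm) \<Rightarrow> ('g \<Rightarrow> 'm) set" where
  "B1 L G act = {\<delta>. \<exists>m. \<forall>g. \<delta> g = (if g \<in> L then act m g - m else 0)}"

definition H1 :: "'g set \<Rightarrow> ('g,'b) monoid_scheme \<Rightarrow> ('m::ab_group_add \<Rightarrow> 'g \<Rightarrow> 'm) \<Rightarrow> ('g \<Rightarrow> 'm) set set" where
  "H1 L G act = (\<lambda>\<delta>. {\<delta>' \<in> Z1 L G act. (\<lambda>g. \<delta>' g - \<delta> g) \<in> B1 L G act}) ` Z1 L G act"

definition ext_group :: "('g,'b) monoid_scheme \<Rightarrow> ('m::ab_group_add \<Rightarrow> 'g \<Rightarrow> 'm) \<Rightarrow> ('g \<Rightarrow> 'g \<Rightarrow> 'm) \<Rightarrow> ('g \<times> 'm) monoid" where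
  "ext_group G act \<tau> = \<lparr> partial_object.carrier = carrier G \<times> UNIV,
     monoid.mult = (\<lambda>(g, m) (h, n). (g \<otimes>\<^bsub>G\<^esub> h, act m h + n + \<tau> g h)),
     monoid.one = (\<one>\<^bsub>G\<^esub>, 0) \<rparr>"

definition elem_abelian :: "('a,'c) monoid_scheme \<Rightarrow> nat \<Rightarrow> 'a set \<Rightarrow> bool" where
  "elem_abelian H p E \<longleftrightarrow> subgroup E H \<and> (\<forall>x\<in>E. \<forall>y\<in>E. x \<otimes>\<^bsub>H\<^esub> y = y \<otimes>\<^bsub>H\<^esub> x) \<and>
     (\<forall>x\<in>E. x [^]\<^bsub>H\<^esub> p = \<one>\<^bsub>H\<^esub>)"

definition calL :: "('g,'b) monoid_scheme \<Rightarrow> nat \<Rightarrow> ('m::ab_group_add \<Rightarrow> 'g \<Rightarrow> 'm) \<Rightarrow> ('g \<Rightarrow> 'g \<Rightarrow> 'm) \<Rightarrow> 'g set set" where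
  "calL G p act \<rho> = {L. elem_abelian G p L \<and> in_B2 L G act \<rho>}"

definition Ccompl :: "'g set \<Rightarrow> ('g \<Rightarrow> 'm::ab_group_add) \<Rightarrow> ('g \<Rightarrow> 'm) \<Rightarrow> ('g \<times> 'm) set" where
  "Ccompl L t \<delta> = {(l, t l + \<delta> l) | l. l \<in> L}"

text \<open>Quillen category A_p(S): objects, morphisms (injective homomorphisms induced
  by conjugation in S), isomorphisms, and semi-skeleta (a full subcategory is
  given by its set of objects).\<close>
definition Ap_obj :: "('a,'c) monoid_scheme \<Rightarrow> nat \<Rightarrow> 'a set set" where
  "Ap_obj S p = {E. elem_abelian S p E}"

definition Ap_mor :: "('a,'c) monoid_scheme \<Rightarrow> 'a set \<Rightarrow> 'a set \<Rightarrow> ('a \<Rightarrow> 'a) \<Rightarrow> bool" where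
  "Ap_mor S E E' f \<longleftrightarrow> (\<exists>s\<in>carrier S. \<forall>x\<in>E. f x = s \<otimes>\<^bsub>S\<^esub> x \<otimes>\<^bsub>S\<^esub> inv\<^bsub>S\<^esub> s)
     \<and> f ` E \<subseteq> E' \<and> inj_on f E"

definition Ap_iso :: "('a,'c) monoid_scheme \<Rightarrow> 'a set \<Rightarrow> 'a set \<Rightarrow> bool" where
  "Ap_iso S E E' \<longleftrightarrow> (\<exists>f g. Ap_mor S E E' f \<and> Ap_mor S E' E g \<and>
     (\<forall>x\<in>E. g (f x) = x) \<and> (\<forall>y\<in>E'. f (g y) = y))"

definition semi_skeleton :: "('a,'c) monoid_scheme \<Rightarrow> nat \<Rightarrow> 'a set set \<Rightarrow> bool" where
  "semi_skeleton S p Ob \<longleftrightarrow> Ob \<subseteq> Ap_obj S p \<and> (\<forall>E\<in>Ap_obj S p. \<exists>E'\<in>Ob. Ap_iso S E E')"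

end

theory Submission
  imports Defs
begin

text \<open>An elementary abelian subgroup E of S = Ext(\<rho>) meets T trivially, because T is torsion
  free; so E is the graph of a map \<sigma> on its image L in P which splits \<rho> over L. Hence the
  restriction of \<rho> to L is a coboundary and L lies in calL. Two splittings over L differ by a
  1-cocycle, and splittings differing by a 1-coboundary l \<mapsto> m^l - m have graphs conjugate
  under (1,m) \<in> T. So every object is isomorphic to some C_L(\<gamma>) with \<gamma> in the transversal,
  and these objects are indexed injectively by the pairs (L, \<gamma>), i.e. by the pairs (L, [\<gamma>])
  with [\<gamma>] \<in> H^1(L,T).\<close>

lemma (in group) Ap_iso_conjugate:
  assumes s: "s \<in> carrier G" and E: "E \<subseteq> carrier G"
    and E': "E' = (\<lambda>x. s \<otimes> x \<otimes> inv s) ` E"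
  shows "Ap_iso G E E'"
proof -
  define f where "f x = s \<otimes> x \<otimes> inv s" for x
  define g where "g y = inv s \<otimes> y \<otimes> inv (inv s)" for y
  have gf: "g (f x) = x" if "x \<in> carrier G" for x
    using s that by (simp add: f_def g_def m_assoc flip: m_assoc[of "inv s" s])
  have fg: "f (g y) = y" if "y \<in> carrier G" for y
    using s that by (simp add: f_def g_def m_assoc flip: m_assoc[of s "inv s"])
  have fE: "E' = f ` E" using E' by (simp add: f_def)
  have E'G: "E' \<subseteq> carrier G" using fE E s by (auto simp: f_def)
  have gE': "g ` E' \<subseteq> E" using fE E gf by auto
  have "inj_on f E" using gf E by (metis inj_on_inverseI subsetD)
  then have "Ap_mor G E E' f"
    unfolding Ap_mor_def using s fE by (auto simp: f_def)
  moreover have "inj_on g E'" using fg E'G by (metis inj_on_inverseI subsetD)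
  then have "Ap_mor G E' E g"
    unfolding Ap_mor_def using s gE' by (auto simp: g_def intro!: bexI[of _ "inv s"])
  ultimately show ?thesis
    unfolding Ap_iso_def using gf fg E E'G by blast
qed

definition graph_on :: "'a set \<Rightarrow> ('a \<Rightarrow> 'm) \<Rightarrow> ('a \<times> 'm) set" where
  "graph_on L \<sigma> = {(l, \<sigma> l) | l. l \<in> L}"

lemma Ccompl_eq_graph_on: "Ccompl L t \<gamma> = graph_on L (\<lambda>l. t l + \<gamma> l)"
  by (simp add: Ccompl_def graph_on_def)

lemma fst_graph_on [simp]: "fst ` graph_on L \<sigma> = L"
  by (force simp: graph_on_def)

lemma inj_on_Ccompl:
  "inj_on (\<lambda>(L, \<gamma>). Ccompl L (t L) \<gamma>) (Sigma A (\<lambda>L. Z1 L G act))"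
proof (rule inj_onI, clarify)
  fix L \<gamma> L' \<gamma>'
  assume Z: "\<gamma> \<in> Z1 L G act" "\<gamma>' \<in> Z1 L' G act"
    and eq: "Ccompl L (t L) \<gamma> = Ccompl L' (t L') \<gamma>'"
  have L: "L' = L" using arg_cong[OF eq, of "image fst"] by (simp add: Ccompl_eq_graph_on)
  have "\<gamma> x = \<gamma>' x" for x
  proof (cases "x \<in> L")
    case True
    then have "(x, t L x + \<gamma> x) \<in> Ccompl L' (t L') \<gamma>'" using eq by (auto simp: Ccompl_def)
    then show ?thesis using L by (auto simp: Ccompl_def)
  qed (use Z L in \<open>simp add: Z1_def\<close>)
  with L show "L = L' \<and> \<gamma> = \<gamma>'" by auto
qed

locale ext_setting = group G for G :: "('g, 'b) monoid_scheme" (structure) +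
  fixes act :: "'m::ab_group_add \<Rightarrow> 'g \<Rightarrow> 'm" and \<rho> :: "'g \<Rightarrow> 'g \<Rightarrow> 'm"
  assumes right_module: "right_module G act" and cocycle: "\<rho> \<in> Z2 G act"
begin

abbreviation "S \<equiv> ext_group G act \<rho>"

lemma act_one [simp]: "act m \<one> = m"
  using right_module by (simp add: right_module_def)

lemma act_mult: "g \<in> carrier G \<Longrightarrow> h \<in> carrier G \<Longrightarrow> act m (g \<otimes> h) = act (act m g) h"
  using right_module by (simp add: right_module_def)

lemma act_add: "g \<in> carrier G \<Longrightarrow> act (m + n) g = act m g + act n g"
  using right_module by (simp add: right_module_def)

lemma act_zero [simp]: "g \<in> carrier G \<Longrightarrow> act 0 g = 0"
  using act_add[of g 0 0] by simp

lemma act_minus: "g \<in> carrier G \<Longrightarrow> act (- m) g = - act m g"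
  using act_add[of g m "- m"] by (simp add: eq_neg_iff_add_eq_0 add.commute)

lemma act_diff: "g \<in> carrier G \<Longrightarrow> act (m - n) g = act m g - act n g"
  using act_add[of g m "- n"] act_minus[of g n] by simp

lemma cocycle_one [simp]: "g \<in> carrier G \<Longrightarrow> \<rho> g \<one> = 0" "g \<in> carrier G \<Longrightarrow> \<rho> \<one> g = 0"
  using cocycle by (auto simp: Z2_def)

lemma cocycle_identity:
  "g \<in> carrier G \<Longrightarrow> h \<in> carrier G \<Longrightarrow> k \<in> carrier G \<Longrightarrow>
   act (\<rho> g h) k + \<rho> (g \<otimes> h) k = \<rho> h k + \<rho> g (h \<otimes> k)"
  using cocycle by (auto simp: Z2_def)

lemma ext_mult [simp]: "(g, m) \<otimes>\<^bsub>S\<^esub> (h, n) = (g \<otimes> h, act m h + n + \<rho> g h)"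
  by (simp add: ext_group_def)

lemma ext_one [simp]: "\<one>\<^bsub>S\<^esub> = (\<one>, 0)"
  by (simp add: ext_group_def)

lemma ext_carrier [simp]: "carrier S = carrier G \<times> UNIV"
  by (simp add: ext_group_def)

lemma ext_monoid: "monoid S"
proof
  fix x y z assume "x \<in> carrier S" "y \<in> carrier S" "z \<in> carrier S"
  then obtain g m h n k q where xyz: "x = (g, m)" "y = (h, n)" "z = (k, q)"
    and G: "g \<in> carrier G" "h \<in> carrier G" "k \<in> carrier G" by auto
  have "act (\<rho> g h) k = \<rho> h k + \<rho> g (h \<otimes> k) - \<rho> (g \<otimes> h) k"
    using cocycle_identity[OF G] by (simp add: eq_diff_eq)
  then show "x \<otimes>\<^bsub>S\<^esub> y \<otimes>\<^bsub>S\<^esub> z = x \<otimes>\<^bsub>S\<^esub> (y \<otimes>\<^bsub>S\<^esub> z)"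
    using xyz G by (simp add: m_assoc act_add act_mult algebra_simps)
  show "x \<otimes>\<^bsub>S\<^esub> y \<in> carrier S" using xyz G by simp
next
  fix x assume "x \<in> carrier S"
  then show "\<one>\<^bsub>S\<^esub> \<otimes>\<^bsub>S\<^esub> x = x" "x \<otimes>\<^bsub>S\<^esub> \<one>\<^bsub>S\<^esub> = x" by auto
qed simp

lemma ext_is_group: "group S"
proof (rule monoid.group_l_invI[OF ext_monoid])
  fix x assume "x \<in> carrier S"
  then obtain g m where x: "x = (g, m)" and g: "g \<in> carrier G" by auto
  have "act (act (- m - \<rho> (inv g) g) (inv g)) g = - m - \<rho> (inv g) g"
    using g by (simp flip: act_mult)
  then have "(inv g, act (- m - \<rho> (inv g) g) (inv g)) \<otimes>\<^bsub>S\<^esub> x = \<one>\<^bsub>S\<^esub>"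
    using x g by simp
  then show "\<exists>y\<in>carrier S. y \<otimes>\<^bsub>S\<^esub> x = \<one>\<^bsub>S\<^esub>" using g by force
qed

sublocale S: group S by (rule ext_is_group)

lemma ext_inv_T: "inv\<^bsub>S\<^esub> (\<one>, n) = (\<one>, - n)"
  by (rule S.inv_equality) auto

lemma ext_conj_T:
  "l \<in> carrier G \<Longrightarrow> (\<one>, n) \<otimes>\<^bsub>S\<^esub> (l, a) \<otimes>\<^bsub>S\<^esub> inv\<^bsub>S\<^esub> (\<one>, n) = (l, a + act n l - n)"
  by (simp add: ext_inv_T act_add algebra_simps)

lemma ext_pow_T: "(\<one>, t) [^]\<^bsub>S\<^esub> (n::nat) = (\<one>, \<Sum>i<n. t)"
  by (induction n) (simp_all add: add.commute)

lemma group_hom_fst: "group_hom S G fst"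
  by (auto simp: group_hom_def group_hom_axioms_def hom_def ext_is_group is_group)

text \<open>The graphs of splittings over L are exactly the complements to T in the preimage of L.\<close>

definition splitting :: "'g set \<Rightarrow> ('g \<Rightarrow> 'm) \<Rightarrow> bool" where
  "splitting L \<sigma> \<longleftrightarrow> (\<forall>g\<in>L. \<forall>h\<in>L. \<sigma> (g \<otimes> h) = act (\<sigma> g) h + \<sigma> h + \<rho> g h)"

lemma splitting_one:
  assumes "subgroup L G" "splitting L \<sigma>" shows "\<sigma> \<one> = 0"
  using assms subgroup.one_closed[OF assms(1)] unfolding splitting_def
  by (metis act_one add_cancel_left_left add_cancel_left_right cocycle_one(1) l_one one_closed)

lemma splitting_in_B2:
  assumes "subgroup L G" "splitting L \<sigma>" shows "in_B2 L G act \<rho>"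
  unfolding in_B2_def
proof (intro exI conjI ballI)
  show "(\<lambda>x. if x \<in> L then \<sigma> x else 0) \<one> = 0" using splitting_one[OF assms] by simp
  fix g h assume "g \<in> L" "h \<in> L"
  then show "\<rho> g h = (\<lambda>x. if x \<in> L then \<sigma> x else 0) (g \<otimes> h)
      - act ((\<lambda>x. if x \<in> L then \<sigma> x else 0) g) h - (\<lambda>x. if x \<in> L then \<sigma> x else 0) h"
    using assms subgroup.m_closed[OF assms(1)] by (simp add: splitting_def)
qed

lemma splitting_add_Z1:
  assumes "L \<subseteq> carrier G" "splitting L t" "\<gamma> \<in> Z1 L G act"
  shows "splitting L (\<lambda>l. t l + \<gamma> l)"
  using assms by (auto simp: splitting_def Z1_def act_add subset_iff algebra_simps)

lemma splitting_diff_Z1: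
  assumes L: "subgroup L G" and "splitting L \<sigma>" "splitting L t"
  shows "(\<lambda>l. if l \<in> L then \<sigma> l - t l else 0) \<in> Z1 L G act"
  using assms subgroup.m_closed[OF L] subgroup.mem_carrier[OF L]
  by (auto simp: splitting_def Z1_def act_diff algebra_simps)

lemma graph_on_mult:
  "splitting L \<sigma> \<Longrightarrow> a \<in> L \<Longrightarrow> b \<in> L \<Longrightarrow> (a, \<sigma> a) \<otimes>\<^bsub>S\<^esub> (b, \<sigma> b) = (a \<otimes> b, \<sigma> (a \<otimes> b))"
  by (simp add: splitting_def)

lemma graph_on_subgroup:
  assumes L: "subgroup L G" and \<sigma>: "splitting L \<sigma>" shows "subgroup (graph_on L \<sigma>) S"
proof
  show "graph_on L \<sigma> \<subseteq> carrier S" using subgroup.subset[OF L] by (auto simp: graph_on_def)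
  show "\<one>\<^bsub>S\<^esub> \<in> graph_on L \<sigma>"
    using splitting_one[OF L \<sigma>] subgroup.one_closed[OF L] by (force simp: graph_on_def)
  fix x y assume "x \<in> graph_on L \<sigma>" "y \<in> graph_on L \<sigma>"
  then obtain a b where ab: "x = (a, \<sigma> a)" "y = (b, \<sigma> b)" "a \<in> L" "b \<in> L"
    by (auto simp: graph_on_def)
  then show "x \<otimes>\<^bsub>S\<^esub> y \<in> graph_on L \<sigma>"
    using graph_on_mult[OF \<sigma>] subgroup.m_closed[OF L] by (auto simp: graph_on_def simp del: ext_mult)
  have a: "inv a \<in> L" "a \<in> carrier G" using ab subgroup.m_inv_closed[OF L] subgroup.mem_carrier[OF L] by auto
  have "(inv a, \<sigma> (inv a)) \<otimes>\<^bsub>S\<^esub> x = \<one>\<^bsub>S\<^esub>"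
    using graph_on_mult[OF \<sigma> a(1) ab(3)] ab a splitting_one[OF L \<sigma>] by simp
  then have "inv\<^bsub>S\<^esub> x = (inv a, \<sigma> (inv a))" using S.inv_equality ab a by auto
  then show "inv\<^bsub>S\<^esub> x \<in> graph_on L \<sigma>" using a by (auto simp: graph_on_def)
qed

lemma graph_on_elem_abelian:
  assumes L: "elem_abelian G p L" and \<sigma>: "splitting L \<sigma>"
  shows "elem_abelian S p (graph_on L \<sigma>)"
proof -
  interpret fst: group_hom S G fst by (rule group_hom_fst)
  have sub: "subgroup L G" using L by (simp add: elem_abelian_def)
  have E: "subgroup (graph_on L \<sigma>) S" by (rule graph_on_subgroup[OF sub \<sigma>])
  have fst_inj: "x = y" if "x \<in> graph_on L \<sigma>" "y \<in> graph_on L \<sigma>" "fst x = fst y" for x y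
    using that by (auto simp: graph_on_def)
  have pow_closed: "x [^]\<^bsub>S\<^esub> (n::nat) \<in> graph_on L \<sigma>" if "x \<in> graph_on L \<sigma>" for x n
    using that subgroup.one_closed[OF E] subgroup.m_closed[OF E]
    by (induction n) (simp_all del: ext_one ext_mult)
  show ?thesis unfolding elem_abelian_def
  proof (intro conjI ballI)
    fix x y assume xy: "x \<in> graph_on L \<sigma>" "y \<in> graph_on L \<sigma>"
    then have G: "x \<in> carrier S" "y \<in> carrier S" using subgroup.mem_carrier[OF E] by auto
    have "fst x \<otimes> fst y = fst y \<otimes> fst x" using L xy by (force simp: elem_abelian_def graph_on_def)
    then show "x \<otimes>\<^bsub>S\<^esub> y = y \<otimes>\<^bsub>S\<^esub> x"
      using fst_inj xy G subgroup.m_closed[OF E] by simp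
  next
    fix x assume x: "x \<in> graph_on L \<sigma>"
    then have "fst (x [^]\<^bsub>S\<^esub> p) = \<one>"
      using L x subgroup.mem_carrier[OF E]
      by (force simp: fst.hom_nat_pow elem_abelian_def graph_on_def)
    then show "x [^]\<^bsub>S\<^esub> p = \<one>\<^bsub>S\<^esub>"
      using fst_inj[of "x [^]\<^bsub>S\<^esub> p" "\<one>\<^bsub>S\<^esub>"] x pow_closed subgroup.one_closed[OF E]
      by simp
  qed (rule E)
qed

lemma elem_abelian_inj_on_fst:
  assumes E: "elem_abelian S p E" and p: "0 < p"
    and torsion_free: "\<forall>(n::nat) (m::'m). 0 < n \<and> (\<Sum>i<n. m) = 0 \<longrightarrow> m = 0"
  shows "inj_on fst E"
proof (rule inj_onI)
  interpret fst: group_hom S G fst by (rule group_hom_fst)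
  have sub: "subgroup E S" using E by (simp add: elem_abelian_def)
  fix x y assume xy: "x \<in> E" "y \<in> E" and eq: "fst x = fst y"
  then have G: "x \<in> carrier S" "y \<in> carrier S" using subgroup.mem_carrier[OF sub] by auto
  define z where "z = x \<otimes>\<^bsub>S\<^esub> inv\<^bsub>S\<^esub> y"
  have "z \<in> E" unfolding z_def using xy sub by (simp add: subgroup.m_closed subgroup.m_inv_closed)
  then have "z [^]\<^bsub>S\<^esub> p = \<one>\<^bsub>S\<^esub>" using E by (simp add: elem_abelian_def)
  moreover have "z = (\<one>, snd z)"
    using G eq by (metis z_def S.inv_closed fst.hom_inv fst.hom_mult fst.hom_closed r_inv prod.collapse)
  ultimately have "(\<Sum>i<p. snd z) = 0" by (metis ext_pow_T ext_one prod.inject)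
  with torsion_free p have "snd z = 0" by blast
  with \<open>z = (\<one>, snd z)\<close> have "x \<otimes>\<^bsub>S\<^esub> inv\<^bsub>S\<^esub> y = \<one>\<^bsub>S\<^esub>" by (simp add: z_def)
  then show "x = y" using G S.inv_equality S.inv_inv by fastforce
qed

lemma elem_abelian_eq_graph_on:
  assumes E: "elem_abelian S p E" and p: "0 < p"
    and torsion_free: "\<forall>(n::nat) (m::'m). 0 < n \<and> (\<Sum>i<n. m) = 0 \<longrightarrow> m = 0"
  obtains L \<sigma> where "E = graph_on L \<sigma>" "elem_abelian G p L" "splitting L \<sigma>"
proof
  interpret fst: group_hom S G fst by (rule group_hom_fst)
  have sub: "subgroup E S" using E by (simp add: elem_abelian_def)
  define \<sigma> where "\<sigma> = snd \<circ> the_inv_into E fst"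
  have x_eq: "(fst x, \<sigma> (fst x)) = x" if "x \<in> E" for x
    using that the_inv_into_f_f[OF elem_abelian_inj_on_fst[OF E p torsion_free]]
    by (simp add: \<sigma>_def)
  show EG: "E = graph_on (fst ` E) \<sigma>"
  proof -
    have "graph_on (fst ` E) \<sigma> = (\<lambda>x. (fst x, \<sigma> (fst x))) ` E"
      unfolding graph_on_def by blast
    also have "\<dots> = E" using x_eq by (simp cong: image_cong)
    finally show ?thesis ..
  qed
  show "splitting (fst ` E) \<sigma>" unfolding splitting_def
  proof (intro ballI)
    fix a b assume "a \<in> fst ` E" "b \<in> fst ` E"
    then have "(a, \<sigma> a) \<in> E" "(b, \<sigma> b) \<in> E" using EG by (auto simp: graph_on_def)
    then have "(a, \<sigma> a) \<otimes>\<^bsub>S\<^esub> (b, \<sigma> b) \<in> E" using subgroup.m_closed[OF sub] by blast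
    from x_eq[OF this] show "\<sigma> (a \<otimes> b) = act (\<sigma> a) b + \<sigma> b + \<rho> a b" by simp
  qed
  show "elem_abelian G p (fst ` E)" unfolding elem_abelian_def
  proof (intro conjI ballI)
    show "subgroup (fst ` E) G" by (rule fst.subgroup_img_is_subgroup[OF sub])
    fix a b assume "a \<in> fst ` E" "b \<in> fst ` E"
    then obtain x y where xy: "x \<in> E" "y \<in> E" and "a = fst x" "b = fst y" by blast
    moreover have "x \<otimes>\<^bsub>S\<^esub> y = y \<otimes>\<^bsub>S\<^esub> x" using E xy by (simp add: elem_abelian_def)
    ultimately show "a \<otimes> b = b \<otimes> a"
      using subgroup.mem_carrier[OF sub] by (metis fst.hom_mult)
  next
    fix a assume "a \<in> fst ` E"
    then obtain x where "x \<in> E" "a = fst x" by blast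
    moreover have "x [^]\<^bsub>S\<^esub> p = \<one>\<^bsub>S\<^esub>" using E \<open>x \<in> E\<close> by (simp add: elem_abelian_def)
    ultimately show "a [^] p = \<one>"
      using subgroup.mem_carrier[OF sub] by (metis fst.hom_nat_pow fst.hom_one)
  qed
qed

lemma graph_on_conj_T:
  assumes "L \<subseteq> carrier G" and "\<And>l. l \<in> L \<Longrightarrow> \<sigma>' l = \<sigma> l + act m l - m"
  shows "Ap_iso S (graph_on L \<sigma>) (graph_on L \<sigma>')"
proof (rule S.Ap_iso_conjugate)
  show "(\<one>, m) \<in> carrier S" by simp
  show "graph_on L \<sigma> \<subseteq> carrier S" using assms(1) by (auto simp: graph_on_def)
  show "graph_on L \<sigma>' = (\<lambda>x. (\<one>, m) \<otimes>\<^bsub>S\<^esub> x \<otimes>\<^bsub>S\<^esub> inv\<^bsub>S\<^esub> (\<one>, m)) ` graph_on L \<sigma>"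
    using assms by (force simp: graph_on_def ext_conj_T simp del: ext_mult)
qed

lemma B1_add:
  assumes "L \<subseteq> carrier G" "a \<in> B1 L G act" "b \<in> B1 L G act"
  shows "(\<lambda>g. a g + b g) \<in> B1 L G act"
proof -
  obtain m n where "\<forall>g. a g = (if g \<in> L then act m g - m else 0)"
    "\<forall>g. b g = (if g \<in> L then act n g - n else 0)" using assms(2,3) by (auto simp: B1_def)
  then have "\<forall>g. a g + b g = (if g \<in> L then act (m + n) g - (m + n) else 0)"
    using assms(1) by (auto simp: act_add)
  then show ?thesis by (auto simp: B1_def)
qed

lemma B1_uminus:
  assumes "L \<subseteq> carrier G" "a \<in> B1 L G act"
  shows "(\<lambda>g. - a g) \<in> B1 L G act"
proof -
  obtain m where "\<forall>g. a g = (if g \<in> L then act m g - m else 0)"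
    using assms(2) by (auto simp: B1_def)
  then have "\<forall>g. - a g = (if g \<in> L then act (- m) g - (- m) else 0)"
    using assms(1) by (auto simp: act_minus)
  then show ?thesis unfolding B1_def by blast
qed

lemma B1_zero: "L \<subseteq> carrier G \<Longrightarrow> (\<lambda>g. 0) \<in> B1 L G act"
  unfolding B1_def by (auto intro!: exI[of _ 0])

definition cohom_class :: "'g set \<Rightarrow> ('g \<Rightarrow> 'm) \<Rightarrow> ('g \<Rightarrow> 'm) set" where
  "cohom_class L \<delta> = {\<delta>' \<in> Z1 L G act. (\<lambda>g. \<delta>' g - \<delta> g) \<in> B1 L G act}"

lemma cohom_class_eq:
  assumes "L \<subseteq> carrier G" "(\<lambda>g. \<delta> g - \<gamma> g) \<in> B1 L G act"
  shows "cohom_class L \<delta> = cohom_class L \<gamma>"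
proof -
  have "(\<lambda>g. x g - \<delta> g) \<in> B1 L G act \<longleftrightarrow> (\<lambda>g. x g - \<gamma> g) \<in> B1 L G act" for x
    using B1_add[OF assms(1) _ assms(2), of "\<lambda>g. x g - \<delta> g"]
      B1_add[OF assms(1) _ B1_uminus[OF assms], of "\<lambda>g. x g - \<gamma> g"]
    by auto
  then show ?thesis by (simp add: cohom_class_def)
qed

lemma bij_betw_transversal_H1:
  assumes L: "L \<subseteq> carrier G" and Tr: "Tr \<subseteq> Z1 L G act"
    and transversal: "\<forall>\<delta>\<in>Z1 L G act. \<exists>!\<gamma>. \<gamma> \<in> Tr \<and> (\<lambda>g. \<delta> g - \<gamma> g) \<in> B1 L G act"
  shows "bij_betw (cohom_class L) Tr (H1 L G act)"
proof (rule bij_betw_imageI)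
  have H1: "H1 L G act = cohom_class L ` Z1 L G act"
    by (simp add: H1_def cohom_class_def)
  have self: "(\<lambda>g. \<delta> g - \<delta> g) \<in> B1 L G act" for \<delta> using B1_zero[OF L] by simp
  show "inj_on (cohom_class L) Tr"
  proof (rule inj_onI)
    fix a b assume ab: "a \<in> Tr" "b \<in> Tr" and "cohom_class L a = cohom_class L b"
    then have "a \<in> cohom_class L b" using Tr self by (auto simp: cohom_class_def)
    then show "a = b" using transversal ab Tr self by (auto simp: cohom_class_def)
  qed
  show "cohom_class L ` Tr = H1 L G act"
  proof
    show "cohom_class L ` Tr \<subseteq> H1 L G act" using H1 Tr by auto
    show "H1 L G act \<subseteq> cohom_class L ` Tr"
    proof
      fix C assume "C \<in> H1 L G act"
      then obtain \<delta> where "\<delta> \<in> Z1 L G act" "C = cohom_class L \<delta>" using H1 by auto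
      with transversal obtain \<gamma> where "\<gamma> \<in> Tr" "C = cohom_class L \<gamma>"
        using cohom_class_eq[OF L] by blast
      then show "C \<in> cohom_class L ` Tr" by blast
    qed
  qed
qed

lemma graph_on_iso_transversal:
  assumes L: "subgroup L G" and \<sigma>: "splitting L \<sigma>" and t: "splitting L t"
    and transversal: "\<forall>\<delta>\<in>Z1 L G act. \<exists>\<gamma>\<in>Tr. (\<lambda>g. \<delta> g - \<gamma> g) \<in> B1 L G act"
  shows "\<exists>\<gamma>\<in>Tr. Ap_iso S (graph_on L \<sigma>) (graph_on L (\<lambda>l. t l + \<gamma> l))"
proof -
  obtain \<gamma> m where "\<gamma> \<in> Tr"
    and m: "\<forall>l. (if l \<in> L then \<sigma> l - t l else 0) - \<gamma> l = (if l \<in> L then act m l - m else 0)"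
    using transversal splitting_diff_Z1[OF L \<sigma> t] by (fastforce simp: B1_def)
  have "Ap_iso S (graph_on L \<sigma>) (graph_on L (\<lambda>l. t l + \<gamma> l))"
  proof (rule graph_on_conj_T[where m = "- m"])
    show "L \<subseteq> carrier G" by (rule subgroup.subset[OF L])
    fix l assume "l \<in> L"
    with m[rule_format, of l] subgroup.mem_carrier[OF L] show "t l + \<gamma> l = \<sigma> l + act (- m) l - - m"
      by (simp add: act_minus algebra_simps)
  qed
  with \<open>\<gamma> \<in> Tr\<close> show ?thesis by blast
qed

end

locale quillen_setting = ext_setting G act \<rho>
  for G :: "('g, 'b) monoid_scheme" (structure) and act :: "'m::ab_group_add \<Rightarrow> 'g \<Rightarrow> 'm"
    and \<rho> +
  fixes p :: nat and tL :: "'g set \<Rightarrow> 'g \<Rightarrow> 'm" and Tr :: "'g set \<Rightarrow> ('g \<Rightarrow> 'm) set"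
  assumes p_pos: "0 < p"
    and torsion_free: "\<forall>(n::nat) (m::'m). 0 < n \<and> (\<Sum>i<n. m) = 0 \<longrightarrow> m = 0"
    and complement: "L \<in> calL G p act \<rho> \<Longrightarrow> splitting L (tL L)"
    and transversal_subset: "L \<in> calL G p act \<rho> \<Longrightarrow> Tr L \<subseteq> Z1 L G act"
    and transversal: "L \<in> calL G p act \<rho> \<Longrightarrow>
      \<forall>\<delta>\<in>Z1 L G act. \<exists>!\<gamma>. \<gamma> \<in> Tr L \<and> (\<lambda>g. \<delta> g - \<gamma> g) \<in> B1 L G act"
begin

definition objects :: "('g \<times> 'm) set set" where
  "objects = {Ccompl L (tL L) \<gamma> | L \<gamma>. L \<in> calL G p act \<rho> \<and> \<gamma> \<in> Tr L}"

lemma calL_subgroup: "L \<in> calL G p act \<rho> \<Longrightarrow> subgroup L G"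
  by (simp add: calL_def elem_abelian_def)

lemma objects_subset_Ap_obj: "objects \<subseteq> Ap_obj S p"
proof
  fix E assume "E \<in> objects"
  then obtain L \<gamma> where L: "L \<in> calL G p act \<rho>" and "\<gamma> \<in> Tr L"
    and E: "E = graph_on L (\<lambda>l. tL L l + \<gamma> l)"
    by (auto simp: objects_def Ccompl_eq_graph_on)
  then have "splitting L (\<lambda>l. tL L l + \<gamma> l)"
    using splitting_add_Z1[OF subgroup.subset[OF calL_subgroup[OF L]] complement[OF L]]
      transversal_subset[OF L] by blast
  moreover have "elem_abelian G p L" using L by (simp add: calL_def)
  ultimately show "E \<in> Ap_obj S p"
    unfolding Ap_obj_def E using graph_on_elem_abelian by blast
qed

lemma Ap_iso_objects:
  assumes "E \<in> Ap_obj S p" shows "\<exists>E'\<in>objects. Ap_iso S E E'"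
proof -
  have "elem_abelian S p E" using assms by (simp add: Ap_obj_def)
  then obtain L \<sigma> where E: "E = graph_on L \<sigma>" "elem_abelian G p L" "splitting L \<sigma>"
    using elem_abelian_eq_graph_on p_pos torsion_free by blast
  then have "in_B2 L G act \<rho>" using splitting_in_B2 by (simp add: elem_abelian_def)
  with E(2) have L: "L \<in> calL G p act \<rho>" by (simp add: calL_def)
  then obtain \<gamma> where "\<gamma> \<in> Tr L" "Ap_iso S E (graph_on L (\<lambda>l. tL L l + \<gamma> l))"
    using graph_on_iso_transversal[OF calL_subgroup[OF L] E(3) complement[OF L], of "Tr L"]
      transversal[OF L] E(1)
    by blast
  with L show ?thesis by (auto simp: objects_def Ccompl_eq_graph_on)
qed

lemma semi_skeleton_objects: "semi_skeleton S p objects"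
  unfolding semi_skeleton_def using objects_subset_Ap_obj Ap_iso_objects by blast

lemma objects_eqpoll: "objects \<approx> Sigma (calL G p act \<rho>) (\<lambda>L. H1 L G act)"
proof -
  have "objects = (\<lambda>(L, \<gamma>). Ccompl L (tL L) \<gamma>) ` Sigma (calL G p act \<rho>) Tr"
    by (auto simp: objects_def)
  also have "\<dots> \<approx> Sigma (calL G p act \<rho>) Tr"
    by (rule inj_on_image_eqpoll_self, rule inj_on_subset[OF inj_on_Ccompl])
      (use transversal_subset in auto)
  also have "\<dots> \<approx> Sigma (calL G p act \<rho>) (\<lambda>L. H1 L G act)"
    using bij_betw_transversal_H1[OF subgroup.subset[OF calL_subgroup] transversal_subset transversal]
    by (intro Sigma_eqpoll_cong[OF bij_betw_id]) (auto simp: eqpoll_def)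
  finally show ?thesis .
qed

lemma card_objects:
  assumes "finite (carrier G)" and "\<forall>L\<in>calL G p act \<rho>. finite (H1 L G act)"
  shows "card objects = (\<Sum>L\<in>calL G p act \<rho>. card (H1 L G act))"
proof -
  have "calL G p act \<rho> \<subseteq> Pow (carrier G)" using calL_subgroup subgroup.subset by blast
  then have fin: "finite (calL G p act \<rho>)" using assms(1) by (simp add: finite_subset)
  then have "finite (Sigma (calL G p act \<rho>) (\<lambda>L. H1 L G act))" using assms(2) by blast
  then have "card objects = card (Sigma (calL G p act \<rho>) (\<lambda>L. H1 L G act))"
    using objects_eqpoll eqpoll_finite_iff eqpoll_iff_card by blast
  with fin assms(2) show ?thesis by simp
qed

end

theorem lemma6p1:
  fixes G :: "('g,'b) monoid_scheme"
    and act :: "'m::ab_group_add \<Rightarrow> 'g \<Rightarrow> 'm"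
    and \<rho> :: "'g \<Rightarrow> 'g \<Rightarrow> 'm"
    and p :: nat
    and tL :: "'g set \<Rightarrow> 'g \<Rightarrow> 'm"
    and Tr :: "'g set \<Rightarrow> ('g \<Rightarrow> 'm) set"
  assumes "Factorial_Ring.prime p"
    and "group G" and "finite (carrier G)" and "\<exists>k. card (carrier G) = p ^ k"
    and "right_module G act"
    and torsion_free: "\<forall>(n::nat) (m::'m). 0 < n \<and> (\<Sum>i<n. m) = 0 \<longrightarrow> m = 0"
    and "\<rho> \<in> Z2 G act"
    and complements: "\<forall>L\<in>calL G p act \<rho>. \<forall>g\<in>L. \<forall>h\<in>L.
           tL L (g \<otimes>\<^bsub>G\<^esub> h) = act (tL L g) h + tL L h + \<rho> g h"
    and transversals: "\<forall>L\<in>calL G p act \<rho>. Tr L \<subseteq> Z1 L G act \<and>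
           (\<forall>\<delta>\<in>Z1 L G act. \<exists>!\<gamma>. \<gamma> \<in> Tr L \<and> (\<lambda>g. \<delta> g - \<gamma> g) \<in> B1 L G act)"
  shows "semi_skeleton (ext_group G act \<rho>) p
           {Ccompl L (tL L) \<gamma> | L \<gamma>. L \<in> calL G p act \<rho> \<and> \<gamma> \<in> Tr L}
       \<and> {Ccompl L (tL L) \<gamma> | L \<gamma>. L \<in> calL G p act \<rho> \<and> \<gamma> \<in> Tr L}
           \<approx> Sigma (calL G p act \<rho>) (\<lambda>L. H1 L G act)
       \<and> ((\<forall>L\<in>calL G p act \<rho>. finite (H1 L G act)) \<longrightarrow>
           card {Ccompl L (tL L) \<gamma> | L \<gamma>. L \<in> calL G p act \<rho> \<and> \<gamma> \<in> Tr L}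
             = (\<Sum>L\<in>calL G p act \<rho>. card (H1 L G act)))"
proof -
  interpret quillen_setting G act \<rho> p tL Tr
  proof (rule quillen_setting.intro)
    show "ext_setting G act \<rho>"
      using assms(2,5,7) by (simp add: ext_setting_def ext_setting_axioms_def)
    then interpret ext_setting G act \<rho> .
    show "quillen_setting_axioms G act \<rho> p tL Tr"
      using assms(1,6,8,9) prime_gt_0_nat by (simp add: quillen_setting_axioms_def splitting_def)
  qed
  show ?thesis
    using semi_skeleton_objects objects_eqpoll card_objects[OF assms(3)]
    by (simp add: objects_def)
qed

end
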